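(* Under the TLT diffusion model, the conditional intertwined influence function is monotone: for every target product $p^j$, every fixed choice of seed sets $\mathcal{S}^{-j}$ of the other products, every $\mathcal{T}\subseteq\mathcal{V}$ and every $u\in\mathcal{V}\setminus\mathcal{T}$, $I(\mathcal{T}\cup\{u\}\mid\mathcal{S}^{-j})\ge I(\mathcal{T}\mid\mathcal{S}^{-j})$.
   Context: Let $G=(\mathcal{V},\mathcal{E})$ be a directed social network (an edge $(v,u)$ means $v$ can influence $u$) and $\mathcal{P}=\{p^1,\dots,p^n\}$ a set of products. For each product $p^l$ and ordered pair of users $(v,u)$ there is an influence weight $w^l_{v,u}\ge 0$ ($w^l_{v,u}=0$ if $(v,u)\notin\mathcal{E}$). Each user $u_i$ has, for each product $p^l$, an initial threshold $\theta^l_i$, drawn independently and uniformly at random from $[0,1]$. For each user $u_i$ and ordered pair of distinct products $(p^l,p^j)$ a threshold updating coefficient $\phi_i^{l\to j}>0$ is given. TLT diffusion: each product $p^l$ has a seed set $\mathcal{S}^l$; at step $0$ exactly the users of $\mathcal{S}^l$ are active for $p^l$. At each step $t\ge1$, active users stay active, and a user $u_i$ not active for $p^l$ becomes active for $p^l$ if $\sum_{v\text{ active for }p^l\text{ at end of step }t-1} w^l_{v,u_i}\ge \theta^l_i\prod_{p^m\in A_i}\phi_i^{m\to l}$, where $A_i$ is the set of products other than $p^l$ for which $u_i$ is active at the end of step $t-1$. The process runs until nothing changes. Conditional intertwined influence function $I(\mathcal{S}^j\mid\mathcal{S}^{-j})$, where $\mathcal{S}^{-j}$ lists the seed sets of all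 products other than $p^j$: first the products other than $p^j$ diffuse under TLT from $\mathcal{S}^{-j}$ until termination; then each user $u_i$'s threshold for $p^j$ is set to $\theta^j_i\prod_{p^m\in A_i}\phi_i^{m\to j}$, with $A_i$ the set of other products for which $u_i$ ended up active, and $p^j$ diffuses from $\mathcal{S}^j$ under the linear threshold rule with these thresholds and weights $w^j$. $I(\mathcal{S}^j\mid\mathcal{S}^{-j})$ is the expected number of users active for $p^j$ at the end. *)

theory Defs
  imports "HOL-Probability.Probability"
begin

text \<open>
  V : finite set of users; P : finite set of products.
  w l v u : influence weight of v on u for product l.
  th (l, u) : initial threshold of user u for product l.
  phi u m l : threshold updating coefficient of user u for the pair (m -> l).
\<close>

definition tlt_step ::
  "'v set \<Rightarrow> 'p set \<Rightarrow> ('p \<Rightarrow> 'v \<Rightarrow> 'v \<Rightarrow> real) \<Rightarrow> ('p \<times> 'v \<Rightarrow> real)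
   \<Rightarrow> ('v \<Rightarrow> 'p \<Rightarrow> 'p \<Rightarrow> real) \<Rightarrow> ('p \<Rightarrow> 'v set) \<Rightarrow> ('p \<Rightarrow> 'v set)" where
  "tlt_step V Q w th phi act =
     (\<lambda>l. if l \<in> Q then
            act l \<union> {u \<in> V. (\<Sum>v\<in>act l. w l v u)
                        \<ge> th (l, u) * (\<Prod>m\<in>{m \<in> Q. m \<noteq> l \<and> u \<in> act m}. phi u m l)}
          else {})"

fun tlt_iter ::
  "'v set \<Rightarrow> 'p set \<Rightarrow> ('p \<Rightarrow> 'v \<Rightarrow> 'v \<Rightarrow> real) \<Rightarrow> ('p \<times> 'v \<Rightarrow> real)
   \<Rightarrow> ('v \<Rightarrow> 'p \<Rightarrow> 'p \<Rightarrow> real) \<Rightarrow> ('p \<Rightarrow> 'v set) \<Rightarrow> nat \<Rightarrow> ('p \<Rightarrow> 'v set)" where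
  "tlt_iter V Q w th phi S 0 = (\<lambda>l. if l \<in> Q then S l else {})"
| "tlt_iter V Q w th phi S (Suc n) = tlt_step V Q w th phi (tlt_iter V Q w th phi S n)"

text \<open>Final state at termination. The iteration is increasing and the state space
  is finite, so it becomes constant; the terminal state is the union of all steps.\<close>
definition tlt_final ::
  "'v set \<Rightarrow> 'p set \<Rightarrow> ('p \<Rightarrow> 'v \<Rightarrow> 'v \<Rightarrow> real) \<Rightarrow> ('p \<times> 'v \<Rightarrow> real)
   \<Rightarrow> ('v \<Rightarrow> 'p \<Rightarrow> 'p \<Rightarrow> real) \<Rightarrow> ('p \<Rightarrow> 'v set) \<Rightarrow> ('p \<Rightarrow> 'v set)" where
  "tlt_final V Q w th phi S = (\<lambda>l. \<Union>n. tlt_iter V Q w th phi S n l)"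

fun lt_iter :: "'v set \<Rightarrow> ('v \<Rightarrow> 'v \<Rightarrow> real) \<Rightarrow> ('v \<Rightarrow> real) \<Rightarrow> 'v set \<Rightarrow> nat \<Rightarrow> 'v set" where
  "lt_iter V wj thr T 0 = T"
| "lt_iter V wj thr T (Suc n) =
     lt_iter V wj thr T n \<union> {u \<in> V. (\<Sum>v\<in>lt_iter V wj thr T n. wj v u) \<ge> thr u}"

definition lt_final :: "'v set \<Rightarrow> ('v \<Rightarrow> 'v \<Rightarrow> real) \<Rightarrow> ('v \<Rightarrow> real) \<Rightarrow> 'v set \<Rightarrow> 'v set" where
  "lt_final V wj thr T = (\<Union>n. lt_iter V wj thr T n)"

definition cond_active ::
  "'v set \<Rightarrow> 'p set \<Rightarrow> ('p \<Rightarrow> 'v \<Rightarrow> 'v \<Rightarrow> real) \<Rightarrow> ('v \<Rightarrow> 'p \<Rightarrow> 'p \<Rightarrow> real)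
   \<Rightarrow> 'p \<Rightarrow> 'v set \<Rightarrow> ('p \<Rightarrow> 'v set) \<Rightarrow> ('p \<times> 'v \<Rightarrow> real) \<Rightarrow> 'v set" where
  "cond_active V P w phi j T S th =
     (let A = tlt_final V (P - {j}) w th phi S in
      lt_final V (w j)
        (\<lambda>u. th (j, u) * (\<Prod>m\<in>{m \<in> P - {j}. u \<in> A m}. phi u m j)) T)"

definition threshold_measure :: "'v set \<Rightarrow> 'p set \<Rightarrow> ('p \<times> 'v \<Rightarrow> real) measure" where
  "threshold_measure V P = PiM (P \<times> V) (\<lambda>_. uniform_measure lborel {0..1::real})"

definition cond_influence ::
  "'v set \<Rightarrow> 'p set \<Rightarrow> ('p \<Rightarrow> 'v \<Rightarrow> 'v \<Rightarrow> real) \<Rightarrow> ('v \<Rightarrow> 'p \<Rightarrow> 'p \<Rightarrow> real)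
   \<Rightarrow> 'p \<Rightarrow> 'v set \<Rightarrow> ('p \<Rightarrow> 'v set) \<Rightarrow> ennreal" where
  "cond_influence V P w phi j T S =
     (\<integral>\<^sup>+ th. ennreal (real (card (cond_active V P w phi j T S th))) \<partial>threshold_measure V P)"

end

theory Submission
  imports Defs
begin

text \<open>For every fixed realisation of the thresholds, the diffusion of the other products
  does not depend on the seed set of \<open>p\<^sup>j\<close>, so the updated thresholds are fixed as well; the
  linear threshold process with nonnegative weights is monotone in its seed set, because a
  larger active set exerts a larger total influence on every user. Taking cardinalities and
  integrating gives monotonicity of the expectation.\<close>

lemma lt_iter_subset: "lt_iter V wj thr T n \<subseteq> T \<union> V"
  by (induction n) auto

lemma finite_lt_iter:
  assumes "finite V" "finite T"
  shows "finite (lt_iter V wj thr T n)"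
  by (rule finite_subset[OF lt_iter_subset]) (simp add: assms)

lemma lt_iter_mono:
  assumes "finite V" "finite T'" "T \<subseteq> T'" "\<And>v x. wj v x \<ge> 0"
  shows "lt_iter V wj thr T n \<subseteq> lt_iter V wj thr T' n"
proof (induction n)
  case 0
  then show ?case using assms(3) by simp
next
  case (Suc n)
  have "(\<Sum>v\<in>lt_iter V wj thr T n. wj v x) \<le> (\<Sum>v\<in>lt_iter V wj thr T' n. wj v x)" for x
    by (rule sum_mono2[OF finite_lt_iter[OF assms(1,2)] Suc.IH assms(4)])
  then have "{x \<in> V. (\<Sum>v\<in>lt_iter V wj thr T n. wj v x) \<ge> thr x}
           \<subseteq> {x \<in> V. (\<Sum>v\<in>lt_iter V wj thr T' n. wj v x) \<ge> thr x}"
    using order_trans by blast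
  with Suc.IH show ?case
    by (simp only: lt_iter.simps) blast
qed

lemma lt_final_subset: "lt_final V wj thr T \<subseteq> T \<union> V"
  unfolding lt_final_def by (intro UN_least lt_iter_subset)

lemma finite_lt_final:
  assumes "finite V" "finite T"
  shows "finite (lt_final V wj thr T)"
  by (rule finite_subset[OF lt_final_subset]) (simp add: assms)

lemma lt_final_mono:
  assumes "finite V" "finite T'" "T \<subseteq> T'" "\<And>v x. wj v x \<ge> 0"
  shows "lt_final V wj thr T \<subseteq> lt_final V wj thr T'"
  unfolding lt_final_def by (rule UN_mono[OF subset_refl lt_iter_mono[OF assms]])

lemma card_cond_active_mono:
  assumes "finite V" "finite T'" "T \<subseteq> T'" "\<And>v x. w j v x \<ge> 0"
  shows "card (cond_active V P w phi j T S th) \<le> card (cond_active V P w phi j T' S th)"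
  unfolding cond_active_def Let_def
  by (rule card_mono[OF finite_lt_final[OF assms(1,2)] lt_final_mono[OF assms]])

lemma cond_influence_mono:
  assumes "finite V" "finite T'" "T \<subseteq> T'" "\<And>v x. w j v x \<ge> 0"
  shows "cond_influence V P w phi j T S \<le> cond_influence V P w phi j T' S"
  unfolding cond_influence_def
  by (intro nn_integral_mono ennreal_leI of_nat_mono card_cond_active_mono[of V T' T w j, OF assms])

theorem theorem2:
  fixes V :: "'v set" and E :: "('v \<times> 'v) set" and P :: "'p set"
    and w :: "'p \<Rightarrow> 'v \<Rightarrow> 'v \<Rightarrow> real"
    and phi :: "'v \<Rightarrow> 'p \<Rightarrow> 'p \<Rightarrow> real"
    and S :: "'p \<Rightarrow> 'v set" and T :: "'v set" and j :: 'p and u :: 'v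
  assumes "finite V" and "finite P"
    and "E \<subseteq> V \<times> V"
    and "\<And>l v x. w l v x \<ge> 0"
    and "\<And>l v x. (v, x) \<notin> E \<Longrightarrow> w l v x = 0"
    and "\<And>i l m. i \<in> V \<Longrightarrow> l \<in> P \<Longrightarrow> m \<in> P \<Longrightarrow> l \<noteq> m \<Longrightarrow> phi i l m > 0"
    and "j \<in> P"
    and "\<And>l. l \<in> P - {j} \<Longrightarrow> S l \<subseteq> V"
    and "T \<subseteq> V" and "u \<in> V - T"
  shows "cond_influence V P w phi j (insert u T) S \<ge> cond_influence V P w phi j T S"
proof -
  have "finite (insert u T)"
    using finite_subset[OF assms(9,1)] by simp
  then show ?thesis
    by (rule cond_influence_mono[of V _ T w j, OF assms(1) _ subset_insertI assms(4)])
qed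

end
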